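(* Let $K$ be a connected simplicial complex, let $E$ be the set of edges of a spanning tree of $K$, and let $p$ be a vertex of $K$. Then $\mathcal{G}(K)\cong \mathrm{F}(E)*\pi_1(K,p)$, where $\mathrm{F}(E)$ is the free group on $E$. In particular $\pi_1(K,p)$ is a doubly free factor of $\mathcal{G}(K)$.
   Context: A simplicial complex $K$ is a collection of nonempty finite subsets (simplices) of a vertex set such that every singleton is a simplex and nonempty subsets of simplices are simplices. The floating homotopy group $\mathcal{G}(K)$ is the group presented by generators $[x,y]$ for all vertices $x,y$ with $\{x,y\}$ a simplex (including $x=y$), and relations $[x,z]=[x,y]\cdot[y,z]$ whenever $\{x,y,z\}$ is a simplex (vertices not necessarily distinct). $\pi_1(K,p)$ is the edge-path fundamental group of $K$ at $p$. A group $G$ is a doubly free factor of $H$ if $H\cong F*G$ for some free group $F$, $*$ denoting free product. *)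

theory Defs
  imports "HOL-Algebra.Group"
begin

definition simplicial_complex :: "'v set set \<Rightarrow> bool" where
  "simplicial_complex K \<longleftrightarrow>
     (\<forall>\<sigma>\<in>K. \<sigma> \<noteq> {} \<and> finite \<sigma>) \<and>
     (\<forall>\<sigma>\<in>K. \<forall>\<tau>. \<tau> \<noteq> {} \<and> \<tau> \<subseteq> \<sigma> \<longrightarrow> \<tau> \<in> K)"

definition vertices :: "'v set set \<Rightarrow> 'v set" where
  "vertices K = \<Union>K"

definition sc_connected :: "'v set set \<Rightarrow> bool" where
  "sc_connected K \<longleftrightarrow>
     (\<forall>x\<in>vertices K. \<forall>y\<in>vertices K. (\<lambda>a b. {a, b} \<in> K)\<^sup>*\<^sup>* x y)"

definition graph_connected :: "'v set \<Rightarrow> 'v set set \<Rightarrow> bool" where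
  "graph_connected V E \<longleftrightarrow> (\<forall>x\<in>V. \<forall>y\<in>V. (\<lambda>a b. {a, b} \<in> E)\<^sup>*\<^sup>* x y)"

definition has_cycle :: "'v set set \<Rightarrow> bool" where
  "has_cycle E \<longleftrightarrow> (\<exists>vs. length vs \<ge> 3 \<and> distinct vs \<and>
      (\<forall>i < length vs - 1. {vs ! i, vs ! Suc i} \<in> E) \<and> {last vs, hd vs} \<in> E)"

definition spanning_tree_edges :: "'v set set \<Rightarrow> 'v set set \<Rightarrow> bool" where
  "spanning_tree_edges K E \<longleftrightarrow>
     E \<subseteq> {\<sigma>\<in>K. card \<sigma> = 2} \<and> graph_connected (vertices K) E \<and> \<not> has_cycle E"

type_synonym 's word = "('s \<times> bool) list"  \<comment> \<open>True = generator, False = its inverse\<close>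

definition words :: "'s set \<Rightarrow> 's word set" where
  "words S = {w. \<forall>x\<in>set w. fst x \<in> S}"

inductive pres_step :: "'s set \<Rightarrow> ('s word \<times> 's word) set \<Rightarrow> 's word \<Rightarrow> 's word \<Rightarrow> bool"
  for S R where
  cancel: "s \<in> S \<Longrightarrow> pres_step S R (u @ [(s, b), (s, \<not> b)] @ v) (u @ v)"
| rel: "(l, r) \<in> R \<Longrightarrow> pres_step S R (u @ l @ v) (u @ r @ v)"

definition pres_eq :: "'s set \<Rightarrow> ('s word \<times> 's word) set \<Rightarrow> 's word \<Rightarrow> 's word \<Rightarrow> bool" where
  "pres_eq S R = (\<lambda>a b. pres_step S R a b \<or> pres_step S R b a)\<^sup>*\<^sup>*"

definition pres_class :: "'s set \<Rightarrow> ('s word \<times> 's word) set \<Rightarrow> 's word \<Rightarrow> 's word set" where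
  "pres_class S R w = {w' \<in> words S. pres_eq S R w w'}"

definition presented_group :: "'s set \<Rightarrow> ('s word \<times> 's word) set \<Rightarrow> 's word set monoid" where
  "presented_group S R =
     \<lparr> carrier = pres_class S R ` words S,
       mult = (\<lambda>A B. pres_class S R ((SOME a. a \<in> A) @ (SOME b. b \<in> B))),
       one = pres_class S R [] \<rparr>"

definition free_group :: "'s set \<Rightarrow> 's word set monoid" where
  "free_group X = presented_group X {}"

definition free_product :: "('a, 'm) monoid_scheme \<Rightarrow> ('b, 'n) monoid_scheme \<Rightarrow> ('a + 'b) word set monoid" where
  "free_product G H = presented_group (Inl ` carrier G \<union> Inr ` carrier H)
     ({([(Inl a, True), (Inl b, True)], [(Inl (a \<otimes>\<^bsub>G\<^esub> b), True)]) | a b. a \<in> carrier G \<and> b \<in> carrier G}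
      \<union> {([(Inr a, True), (Inr b, True)], [(Inr (a \<otimes>\<^bsub>H\<^esub> b), True)]) | a b. a \<in> carrier H \<and> b \<in> carrier H})"

definition floating_group :: "'v set set \<Rightarrow> ('v \<times> 'v) word set monoid" where
  "floating_group K = presented_group {(x, y). {x, y} \<in> K}
     {([((x, z), True)], [((x, y), True), ((y, z), True)]) | x y z. {x, y, z} \<in> K}"

definition edge_path :: "'v set set \<Rightarrow> 'v list \<Rightarrow> bool" where
  "edge_path K vs \<longleftrightarrow> vs \<noteq> [] \<and> (\<forall>i < length vs - 1. {vs ! i, vs ! Suc i} \<in> K)"

definition edge_loops :: "'v set set \<Rightarrow> 'v \<Rightarrow> 'v list set" where
  "edge_loops K p = {vs. edge_path K vs \<and> hd vs = p \<and> last vs = p}"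

inductive ep_step :: "'v set set \<Rightarrow> 'v list \<Rightarrow> 'v list \<Rightarrow> bool" for K where
  tri: "{x, y, z} \<in> K \<Longrightarrow> ep_step K (u @ [x, y, z] @ v) (u @ [x, z] @ v)"
| dup: "ep_step K (u @ [x, x] @ v) (u @ [x] @ v)"

definition ep_eq :: "'v set set \<Rightarrow> 'v list \<Rightarrow> 'v list \<Rightarrow> bool" where
  "ep_eq K = (\<lambda>a b. ep_step K a b \<or> ep_step K b a)\<^sup>*\<^sup>*"

definition ep_class :: "'v set set \<Rightarrow> 'v \<Rightarrow> 'v list \<Rightarrow> 'v list set" where
  "ep_class K p w = {w' \<in> edge_loops K p. ep_eq K w w'}"

definition edge_path_group :: "'v set set \<Rightarrow> 'v \<Rightarrow> 'v list set monoid" where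
  "edge_path_group K p =
     \<lparr> carrier = ep_class K p ` edge_loops K p,
       mult = (\<lambda>A B. ep_class K p ((SOME a. a \<in> A) @ tl (SOME b. b \<in> B))),
       one = ep_class K p [p] \<rparr>"

end

theory Submission
  imports Defs
begin

text \<open>Let \<open>\<gamma>\<^sub>v\<close> be the path from \<open>p\<close> to \<open>v\<close> in the spanning tree and \<open>X\<^sub>v\<close>
  the element of \<open>F(E)\<close> spelled by its edges. Sending \<open>[x,y]\<close> to
  \<open>X\<^sub>x\<inverse> [\<gamma>\<^sub>x x y \<gamma>\<^sub>y\<inverse>] X\<^sub>y\<close> respects the triangle relations, because the
  loop classes multiply along a triangle. Conversely, a tree edge goes to the corresponding generator
  of \<open>\<G>(K)\<close> and a loop at \<open>p\<close> to the product of its edges; edge-path equivalent loops give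
  equal products since \<open>[x,x] = 1\<close> and \<open>[x,y][y,x] = 1\<close> in \<open>\<G>(K)\<close>. On the word of
  a walk the first map telescopes, which makes both composites the identity on generators: the loop
  \<open>\<gamma>\<^sub>u u v \<gamma>\<^sub>v\<inverse>\<close> of a tree edge backtracks, and \<open>X\<^sub>p = 1\<close>.\<close>

section \<open>Words and presented groups\<close>

definition inv_word :: "'s word \<Rightarrow> 's word" where
  "inv_word w = rev (map (\<lambda>(s, b). (s, \<not> b)) w)"

definition subst_word :: "('s \<Rightarrow> 't word) \<Rightarrow> 's word \<Rightarrow> 't word" where
  "subst_word g w = concat (map (\<lambda>(s, b). if b then g s else inv_word (g s)) w)"

lemma inv_word_Nil [simp]: "inv_word [] = []"
  by (simp add: inv_word_def)

lemma inv_word_Cons [simp]: "inv_word (x # w) = inv_word w @ [(fst x, \<not> snd x)]"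
  by (cases x) (simp add: inv_word_def)

lemma inv_word_append [simp]: "inv_word (a @ b) = inv_word b @ inv_word a"
  by (simp add: inv_word_def)

lemma inv_word_inv_word [simp]: "inv_word (inv_word w) = w"
  by (induction w) auto

lemma subst_word_Nil [simp]: "subst_word g [] = []"
  by (simp add: subst_word_def)

lemma subst_word_Cons [simp]:
  "subst_word g (x # w) = (if snd x then g (fst x) else inv_word (g (fst x))) @ subst_word g w"
  by (cases x) (simp add: subst_word_def)

lemma subst_word_append [simp]: "subst_word g (a @ b) = subst_word g a @ subst_word g b"
  by (simp add: subst_word_def)

lemma subst_word_inv_word: "subst_word g (inv_word w) = inv_word (subst_word g w)"
  by (induction w) auto

lemma subst_word_subst_word: "subst_word h (subst_word g w) = subst_word (\<lambda>s. subst_word h (g s)) w"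
  by (induction w) (auto simp: subst_word_inv_word)

lemma words_append [simp]: "a @ b \<in> words S \<longleftrightarrow> a \<in> words S \<and> b \<in> words S"
  by (auto simp: words_def)

lemma words_Cons [simp]: "x # b \<in> words S \<longleftrightarrow> fst x \<in> S \<and> b \<in> words S"
  by (auto simp: words_def)

lemma words_Nil [simp]: "[] \<in> words S"
  by (simp add: words_def)

lemma words_inv_word [simp]: "inv_word w \<in> words S \<longleftrightarrow> w \<in> words S"
  by (induction w) auto

lemma words_subst_word:
  "w \<in> words S \<Longrightarrow> (\<And>s. s \<in> S \<Longrightarrow> g s \<in> words T) \<Longrightarrow> subst_word g w \<in> words T"
  by (induction w) auto

lemma pres_eq_refl [simp]: "pres_eq S R a a"
  by (simp add: pres_eq_def)

lemma pres_eq_sym: "pres_eq S R a b \<Longrightarrow> pres_eq S R b a"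
  unfolding pres_eq_def
proof (induction rule: rtranclp_induct)
  case (step y z)
  then have "(\<lambda>a b. pres_step S R a b \<or> pres_step S R b a) z y" by blast
  then show ?case using step(3) by (rule converse_rtranclp_into_rtranclp)
qed simp

lemma pres_eq_trans [trans]: "pres_eq S R a b \<Longrightarrow> pres_eq S R b c \<Longrightarrow> pres_eq S R a c"
  unfolding pres_eq_def by (rule rtranclp_trans)

lemma pres_eq_step: "pres_step S R a b \<Longrightarrow> pres_eq S R a b"
  unfolding pres_eq_def by auto

lemma pres_step_append_cong: "pres_step S R a b \<Longrightarrow> pres_step S R (u @ a @ v) (u @ b @ v)"
proof (induction rule: pres_step.induct)
  case (cancel s u' b v')
  then show ?case using pres_step.cancel[of s S R "u @ u'" b "v' @ v"] by simp
next
  case (rel l r u' v')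
  then show ?case using pres_step.rel[of l r R S "u @ u'" "v' @ v"] by simp
qed

lemma pres_eq_cong: "pres_eq S R a b \<Longrightarrow> pres_eq S R (u @ a @ v) (u @ b @ v)"
  unfolding pres_eq_def
proof (induction rule: rtranclp_induct)
  case (step y z)
  then show ?case
    using pres_step_append_cong by (metis (mono_tags, lifting) rtranclp.rtrancl_into_rtrancl)
qed simp

lemma pres_eq_append:
  "pres_eq S R a a' \<Longrightarrow> pres_eq S R b b' \<Longrightarrow> pres_eq S R (a @ b) (a' @ b')"
  using pres_eq_cong[of S R a a' "[]" b] pres_eq_cong[of S R b b' a' "[]"]
  by (auto intro: pres_eq_trans)

lemma pres_eq_cancel: "s \<in> S \<Longrightarrow> pres_eq S R (u @ [(s, b), (s, \<not> b)] @ v) (u @ v)"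
  by (rule pres_eq_step) (rule pres_step.cancel)

lemma pres_eq_cancel_pair: "s \<in> S \<Longrightarrow> pres_eq S R [(s, b), (s, \<not> b)] []"
  using pres_eq_cancel[of s S R "[]" b "[]"] by simp

lemma pres_eq_rel: "(l, r) \<in> R \<Longrightarrow> pres_eq S R (u @ l @ v) (u @ r @ v)"
  by (rule pres_eq_step) (rule pres_step.rel)

lemma pres_eq_relator: "(l, r) \<in> R \<Longrightarrow> pres_eq S R l r"
  using pres_eq_rel[of l r R S "[]" "[]"] by simp

lemma pres_eq_append_inv_word: "w \<in> words S \<Longrightarrow> pres_eq S R (w @ inv_word w) []"
proof (induction w)
  case (Cons x w)
  have "pres_eq S R ([x] @ (w @ inv_word w) @ [(fst x, \<not> snd x)]) ([x] @ [] @ [(fst x, \<not> snd x)])"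
    using Cons by (intro pres_eq_cong) auto
  moreover have "pres_eq S R [(fst x, snd x), (fst x, \<not> snd x)] []"
    using Cons by (intro pres_eq_cancel_pair) auto
  ultimately show ?case by (auto intro: pres_eq_trans)
qed simp

lemma pres_eq_inv_word_append: "w \<in> words S \<Longrightarrow> pres_eq S R (inv_word w @ w) []"
  using pres_eq_append_inv_word[of "inv_word w" S R] by simp

lemma pres_eq_inv_word:
  assumes "x \<in> words S" "y \<in> words S" "pres_eq S R x y"
  shows "pres_eq S R (inv_word x) (inv_word y)"
proof -
  have "pres_eq S R (inv_word x) (inv_word x @ y @ inv_word y)"
    using pres_eq_cong[OF pres_eq_sym[OF pres_eq_append_inv_word[OF assms(2)]], where u = "inv_word x" and v = "[]"]
    by simp
  also have "pres_eq S R \<dots> (inv_word x @ x @ inv_word y)"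
    using pres_eq_cong[OF pres_eq_sym[OF assms(3)]] by blast
  also have "pres_eq S R \<dots> (inv_word y)"
    using pres_eq_cong[OF pres_eq_inv_word_append[OF assms(1)], where u = "[]" and v = "inv_word y"] by simp
  finally show ?thesis .
qed

lemma pres_eq_idempotent_letter:
  assumes "s \<in> S" "pres_eq S R [(s, True), (s, True)] [(s, True)]"
  shows "pres_eq S R [(s, True)] []"
proof -
  have "pres_eq S R [(s, True)] ([(s, True)] @ [(s, True), (s, \<not> True)] @ [])"
    using pres_eq_sym[OF pres_eq_cancel[OF assms(1), of R "[(s, True)]" True "[]"]] by simp
  also have "\<dots> = [] @ [(s, True), (s, True)] @ [(s, False)]" by simp
  also have "pres_eq S R \<dots> ([] @ [(s, True)] @ [(s, False)])"
    using pres_eq_cong[OF assms(2)] by blast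
  also have "pres_eq S R \<dots> []"
    using pres_eq_cancel_pair[OF assms(1), of R True] by simp
  finally show ?thesis .
qed

lemma pres_eq_inverse_letter:
  assumes "t \<in> S" "pres_eq S R [(t, True), (s, True)] []"
  shows "pres_eq S R [(t, False)] [(s, True)]"
proof -
  have "pres_eq S R [(t, False)] ([(t, False)] @ [(t, True), (s, True)] @ [])"
    using pres_eq_cong[OF pres_eq_sym[OF assms(2)], where u = "[(t, False)]" and v = "[]"] by simp
  also have "\<dots> = [] @ [(t, False), (t, \<not> False)] @ [(s, True)]" by simp
  also have "pres_eq S R \<dots> ([] @ [(s, True)])"
    using pres_eq_cancel[OF assms(1)] by blast
  finally show ?thesis by simp
qed

lemma pres_eq_subst_word:
  assumes "\<And>s. s \<in> S \<Longrightarrow> g s \<in> words T"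
    and "\<And>l r. (l, r) \<in> R \<Longrightarrow> pres_eq T Q (subst_word g l) (subst_word g r)"
    and "pres_eq S R a b"
  shows "pres_eq T Q (subst_word g a) (subst_word g b)"
proof -
  have one_step: "pres_eq T Q (subst_word g y) (subst_word g z)" if "pres_step S R y z" for y z
    using that
  proof (induction rule: pres_step.induct)
    case (cancel s u b v)
    have "pres_eq T Q (subst_word g [(s, b), (s, \<not> b)]) []"
      using assms(1)[OF cancel] pres_eq_append_inv_word pres_eq_inv_word_append by (cases b) auto
    then show ?case using pres_eq_cong by (metis append_Nil subst_word_append)
  next
    case (rel l r u v)
    then show ?case using assms(2) pres_eq_cong by (metis subst_word_append)
  qed
  show ?thesis
    using assms(3) unfolding pres_eq_def[of S R]
  proof (induction rule: rtranclp_induct)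
    case (step y z)
    then show ?case using one_step pres_eq_sym pres_eq_trans by metis
  qed simp
qed

lemma pres_eq_subst_word_letters:
  assumes "w \<in> words S"
    and "\<And>s. s \<in> S \<Longrightarrow> k s \<in> words T"
    and "\<And>s. s \<in> S \<Longrightarrow> f s \<in> T"
    and "\<And>s. s \<in> S \<Longrightarrow> pres_eq T Q (k s) [(f s, True)]"
  shows "pres_eq T Q (subst_word k w) (map (\<lambda>(s, b). (f s, b)) w)"
  using assms(1)
proof (induction w)
  case (Cons x w)
  obtain s b where x: "x = (s, b)" by force
  have s: "s \<in> S" using Cons x by auto
  have "pres_eq T Q (if b then k s else inv_word (k s)) [(f s, b)]"
  proof (cases b)
    case False
    have "pres_eq T Q (inv_word (k s)) (inv_word [(f s, True)])"
      using pres_eq_inv_word assms(2-4) s by (metis words_Cons words_Nil fst_conv)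
    then show ?thesis using False by simp
  qed (use assms(4) s in simp)
  then have "pres_eq T Q ((if b then k s else inv_word (k s)) @ subst_word k w)
      ([(f s, b)] @ map (\<lambda>(s, b). (f s, b)) w)"
    using Cons x by (intro pres_eq_append) auto
  then show ?case using x by (cases b) auto
qed simp

lemma pres_class_self: "w \<in> words S \<Longrightarrow> w \<in> pres_class S R w"
  by (simp add: pres_class_def)

lemma pres_class_eqI: "pres_eq S R a b \<Longrightarrow> pres_class S R a = pres_class S R b"
  unfolding pres_class_def using pres_eq_sym pres_eq_trans by blast

lemma pres_class_some:
  assumes "w \<in> words S"
  shows "pres_eq S R w (SOME a. a \<in> pres_class S R w) \<and> (SOME a. a \<in> pres_class S R w) \<in> words S"
  using someI[of "\<lambda>a. a \<in> pres_class S R w", OF pres_class_self[OF assms]]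
  by (simp add: pres_class_def)

lemma presented_group_carrier: "carrier (presented_group S R) = pres_class S R ` words S"
  by (simp add: presented_group_def)

lemma presented_group_mult_class:
  assumes "a \<in> words S" "b \<in> words S"
  shows "pres_class S R a \<otimes>\<^bsub>presented_group S R\<^esub> pres_class S R b = pres_class S R (a @ b)"
proof -
  have "pres_eq S R (a @ b) ((SOME x. x \<in> pres_class S R a) @ (SOME x. x \<in> pres_class S R b))"
    using pres_class_some[OF assms(1)] pres_class_some[OF assms(2)] pres_eq_append by blast
  then show ?thesis by (simp add: presented_group_def pres_class_eqI)
qed

definition subst_class ::
  "'t set \<Rightarrow> ('t word \<times> 't word) set \<Rightarrow> ('s \<Rightarrow> 't word) \<Rightarrow> 's word set \<Rightarrow> 't word set" where
  "subst_class T Q g A = pres_class T Q (subst_word g (SOME a. a \<in> A))"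

lemma subst_class_pres_class:
  assumes "\<And>s. s \<in> S \<Longrightarrow> g s \<in> words T"
    and "\<And>l r. (l, r) \<in> R \<Longrightarrow> pres_eq T Q (subst_word g l) (subst_word g r)"
    and "a \<in> words S"
  shows "subst_class T Q g (pres_class S R a) = pres_class T Q (subst_word g a)"
  unfolding subst_class_def
  by (rule pres_class_eqI[symmetric], rule pres_eq_subst_word[OF assms(1,2)])
    (use pres_class_some[OF assms(3)] in auto)

lemma presented_group_iso:
  assumes gw: "\<And>s. s \<in> S \<Longrightarrow> g s \<in> words T"
    and gr: "\<And>l r. (l, r) \<in> R \<Longrightarrow> pres_eq T Q (subst_word g l) (subst_word g r)"
    and hw: "\<And>t. t \<in> T \<Longrightarrow> h t \<in> words S"
    and hr: "\<And>l r. (l, r) \<in> Q \<Longrightarrow> pres_eq S R (subst_word h l) (subst_word h r)"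
    and hg: "\<And>s. s \<in> S \<Longrightarrow> pres_eq S R (subst_word h (g s)) [(s, True)]"
    and gh: "\<And>t. t \<in> T \<Longrightarrow> pres_eq T Q (subst_word g (h t)) [(t, True)]"
  shows "presented_group S R \<cong> presented_group T Q"
proof (rule is_isoI)
  let ?f = "subst_class T Q g" and ?f' = "subst_class S R h"
  note fc = subst_class_pres_class[OF gw gr] and f'c = subst_class_pres_class[OF hw hr]
  have gwa: "subst_word g a \<in> words T" if "a \<in> words S" for a
    using words_subst_word[OF that gw] .
  have hwa: "subst_word h a \<in> words S" if "a \<in> words T" for a
    using words_subst_word[OF that hw] .
  have hgh: "pres_eq S R (subst_word h (subst_word g a)) a" if "a \<in> words S" for a
  proof -
    have "pres_eq S R (subst_word (\<lambda>s. subst_word h (g s)) a) (map (\<lambda>(s, b). (id s, b)) a)"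
      by (rule pres_eq_subst_word_letters[OF that]) (auto intro: words_subst_word gw hw hg)
    then show ?thesis by (simp add: subst_word_subst_word)
  qed
  have ghg: "pres_eq T Q (subst_word g (subst_word h a)) a" if "a \<in> words T" for a
  proof -
    have "pres_eq T Q (subst_word (\<lambda>t. subst_word g (h t)) a) (map (\<lambda>(t, b). (id t, b)) a)"
      by (rule pres_eq_subst_word_letters[OF that]) (auto intro: words_subst_word gw hw gh)
    then show ?thesis by (simp add: subst_word_subst_word)
  qed
  have "?f \<in> hom (presented_group S R) (presented_group T Q)"
    by (rule homI) (auto simp: presented_group_carrier presented_group_mult_class fc gwa)
  moreover have "bij_betw ?f (carrier (presented_group S R)) (carrier (presented_group T Q))"
  proof (rule bij_betw_byWitness[where f' = ?f'])
    show "\<forall>x\<in>carrier (presented_group S R). ?f' (?f x) = x"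
      by (auto simp: presented_group_carrier fc f'c gwa pres_class_eqI[OF hgh])
    show "\<forall>x\<in>carrier (presented_group T Q). ?f (?f' x) = x"
      by (auto simp: presented_group_carrier fc f'c hwa pres_class_eqI[OF ghg])
  qed (auto simp: presented_group_carrier fc f'c gwa hwa)
  ultimately show "?f \<in> iso (presented_group S R) (presented_group T Q)"
    by (simp add: iso_def)
qed

fun walk :: "'v set set \<Rightarrow> 'v list \<Rightarrow> bool" where
  "walk K [] = False"
| "walk K [x] = True"
| "walk K (x # y # r) \<longleftrightarrow> {x, y} \<in> K \<and> walk K (y # r)"

definition walk_between :: "'v set set \<Rightarrow> 'v \<Rightarrow> 'v \<Rightarrow> 'v list \<Rightarrow> bool" where
  "walk_between K a b q \<longleftrightarrow> walk K q \<and> hd q = a \<and> last q = b"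

lemma edge_path_iff_walk: "edge_path K l \<longleftrightarrow> walk K l"
proof (induction K l rule: walk.induct)
  case (3 K x y r)
  have "(\<forall>i<length (x # y # r) - 1. {(x # y # r) ! i, (x # y # r) ! Suc i} \<in> K) \<longleftrightarrow>
        {x, y} \<in> K \<and> (\<forall>i<length (y # r) - 1. {(y # r) ! i, (y # r) ! Suc i} \<in> K)"
    by (auto simp: less_Suc_eq_0_disj)
  then show ?case using 3 by (simp add: edge_path_def)
qed (simp_all add: edge_path_def)

lemma walk_append_iff: "walk K (u @ x # v) \<longleftrightarrow> walk K (u @ [x]) \<and> walk K (x # v)"
proof (induction u)
  case (Cons a u)
  then show ?case by (cases u) auto
qed simp

lemma walk_snoc_iff: "walk K (u @ [x, y]) \<longleftrightarrow> walk K (u @ [x]) \<and> {x, y} \<in> K"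
  using walk_append_iff[of K u x "[y]"] by auto

lemma walk_snoc: "walk K q \<Longrightarrow> {last q, y} \<in> K \<Longrightarrow> walk K (q @ [y])"
  by (induction K q rule: walk.induct) auto

lemma walk_rev [simp]: "walk K (rev l) \<longleftrightarrow> walk K l"
proof (induction K l rule: walk.induct)
  case (3 K x y r)
  then show ?case using walk_snoc_iff[of K "rev r" y x] by (auto simp: insert_commute)
qed auto

lemma walk_mono: "walk K l \<Longrightarrow> K \<subseteq> K' \<Longrightarrow> walk K' l"
  by (induction K l rule: walk.induct) auto

lemma walk_glue: "walk K a \<Longrightarrow> walk K b \<Longrightarrow> last a = hd b \<Longrightarrow> walk K (a @ tl b)"
  by (induction K a rule: walk.induct) (auto elim: walk.elims)

lemma walk_take: "walk K l \<Longrightarrow> i < length l \<Longrightarrow> walk K (take (Suc i) l)"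
proof (induction K l arbitrary: i rule: walk.induct)
  case (3 K x y r)
  then show ?case by (cases i) auto
qed auto

lemma walk_avoiding_edge: "walk E q \<Longrightarrow> v \<notin> set q \<Longrightarrow> v \<in> e \<Longrightarrow> walk (E - {e}) q"
  by (induction E q rule: walk.induct) auto

lemma walk_set_subset: "walk K q \<Longrightarrow> hd q \<in> \<Union>K \<Longrightarrow> set q \<subseteq> \<Union>K"
  by (induction K q rule: walk.induct) auto

lemma walk_between_glue:
  assumes "walk_between K a b q" "walk_between K b c q'"
  shows "walk_between K a c (q @ tl q')"
proof -
  have "q \<noteq> []" "q' \<noteq> []" using assms by (auto simp: walk_between_def)
  then show ?thesis using assms walk_glue[of K q q']
    by (auto simp: walk_between_def last_append elim: walk.elims)
qed

lemma walk_between_rev: "walk_between K a b q \<Longrightarrow> walk_between K b a (rev q)"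
  by (auto simp: walk_between_def hd_rev last_rev)

lemma walk_between_edge: "{x, y} \<in> K \<Longrightarrow> walk_between K x y [x, y]"
  by (simp add: walk_between_def)

lemma walk_between_end_vertex:
  assumes "walk_between K a b q" "a \<in> \<Union>K"
  shows "b \<in> \<Union>K"
proof -
  have "q \<noteq> []" "set q \<subseteq> \<Union>K"
    using assms walk_set_subset[of K q] by (auto simp: walk_between_def)
  then show ?thesis using assms(1) last_in_set[of q] by (auto simp: walk_between_def)
qed

lemma edge_loops_iff: "l \<in> edge_loops K p \<longleftrightarrow> walk_between K p p l"
  by (simp add: edge_loops_def edge_path_iff_walk walk_between_def)

lemma edge_loops_glue: "a \<in> edge_loops K p \<Longrightarrow> b \<in> edge_loops K p \<Longrightarrow> a @ tl b \<in> edge_loops K p"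
  by (simp add: edge_loops_iff walk_between_glue)

lemma ep_eq_refl [simp]: "ep_eq K a a"
  by (simp add: ep_eq_def)

lemma ep_eq_sym: "ep_eq K a b \<Longrightarrow> ep_eq K b a"
  unfolding ep_eq_def
proof (induction rule: rtranclp_induct)
  case (step y z)
  then have "(\<lambda>a b. ep_step K a b \<or> ep_step K b a) z y" by blast
  then show ?case using step(3) by (rule converse_rtranclp_into_rtranclp)
qed simp

lemma ep_eq_trans [trans]: "ep_eq K a b \<Longrightarrow> ep_eq K b c \<Longrightarrow> ep_eq K a c"
  unfolding ep_eq_def by (rule rtranclp_trans)

lemma ep_step_append_cong: "ep_step K a b \<Longrightarrow> ep_step K (u @ a @ v) (u @ b @ v)"
proof (induction rule: ep_step.induct)
  case (tri x y z u' v')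
  then show ?case using ep_step.tri[of x y z K "u @ u'" "v' @ v"] by simp
next
  case (dup u' x v')
  then show ?case using ep_step.dup[of K "u @ u'" x "v' @ v"] by simp
qed

lemma ep_eq_cong: "ep_eq K a b \<Longrightarrow> ep_eq K (u @ a @ v) (u @ b @ v)"
  unfolding ep_eq_def
proof (induction rule: rtranclp_induct)
  case (step y z)
  then show ?case
    using ep_step_append_cong by (metis (mono_tags, lifting) rtranclp.rtrancl_into_rtrancl)
qed simp

lemma ep_eq_tri: "{x, y, z} \<in> K \<Longrightarrow> ep_eq K (u @ [x, y, z] @ v) (u @ [x, z] @ v)"
  unfolding ep_eq_def using ep_step.tri[of x y z K u v] by auto

lemma ep_eq_dup: "ep_eq K (u @ [x, x] @ v) (u @ [x] @ v)"
  unfolding ep_eq_def using ep_step.dup[of K u x v] by auto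

lemma ep_eq_backtrack: "walk K s \<Longrightarrow> ep_eq K (u @ s @ tl (rev s) @ v) (u @ [hd s] @ v)"
proof (induction K s arbitrary: u v rule: walk.induct)
  case (3 K x y r)
  have "ep_eq K (u @ (x # y # r) @ tl (rev (x # y # r)) @ v)
           ((u @ [x]) @ (y # r) @ tl (rev (y # r)) @ ([x] @ v))"
    by (cases "rev r") auto
  also have "ep_eq K \<dots> ((u @ [x]) @ [hd (y # r)] @ ([x] @ v))"
    using 3 by (intro "3.IH") simp
  also have "\<dots> = u @ [x, y, x] @ v"
    by simp
  also have "ep_eq K \<dots> (u @ [x, x] @ v)"
    using ep_eq_tri[of x y x K u v] 3 by (simp add: insert_commute)
  also have "ep_eq K \<dots> (u @ [x] @ v)"
    by (rule ep_eq_dup)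
  finally show ?case by simp
qed simp_all

lemma append_tl_eq_butlast_append:
  "a \<noteq> [] \<Longrightarrow> b \<noteq> [] \<Longrightarrow> last a = hd b \<Longrightarrow> a @ tl b = butlast a @ b"
  by (metis append.assoc append_Cons append_Nil append_butlast_last_id list.collapse)

lemma ep_eq_glue:
  assumes "a' \<in> edge_loops K p" "b \<in> edge_loops K p" "b' \<in> edge_loops K p"
    and "ep_eq K a a'" "ep_eq K b b'"
  shows "ep_eq K (a @ tl b) (a' @ tl b')"
proof -
  have ne: "a' \<noteq> []" "b \<noteq> []" "b' \<noteq> []" "last a' = hd b" "last a' = hd b'"
    using assms(1-3) by (auto simp: edge_loops_iff walk_between_def)
  have "ep_eq K (a @ tl b) (a' @ tl b)"
    using ep_eq_cong[OF assms(4), of "[]" "tl b"] by simp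
  also have "a' @ tl b = butlast a' @ b"
    using ne by (simp add: append_tl_eq_butlast_append)
  also have "ep_eq K \<dots> (butlast a' @ b')"
    using ep_eq_cong[OF assms(5), of "butlast a'" "[]"] by simp
  also have "\<dots> = a' @ tl b'"
    using ne by (simp add: append_tl_eq_butlast_append)
  finally show ?thesis .
qed

lemma ep_class_self: "l \<in> edge_loops K p \<Longrightarrow> l \<in> ep_class K p l"
  by (simp add: ep_class_def)

lemma ep_class_eqI: "ep_eq K a b \<Longrightarrow> ep_class K p a = ep_class K p b"
  unfolding ep_class_def using ep_eq_sym ep_eq_trans by blast

lemma ep_class_some:
  assumes "w \<in> edge_loops K p"
  shows "ep_eq K w (SOME a. a \<in> ep_class K p w) \<and> (SOME a. a \<in> ep_class K p w) \<in> edge_loops K p"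
  using someI[of "\<lambda>a. a \<in> ep_class K p w", OF ep_class_self[OF assms]]
  by (simp add: ep_class_def)

lemma edge_path_group_carrier: "carrier (edge_path_group K p) = ep_class K p ` edge_loops K p"
  by (simp add: edge_path_group_def)

lemma edge_path_group_mult_class:
  assumes "a \<in> edge_loops K p" "b \<in> edge_loops K p"
  shows "ep_class K p a \<otimes>\<^bsub>edge_path_group K p\<^esub> ep_class K p b = ep_class K p (a @ tl b)"
proof -
  have "ep_eq K (a @ tl b) ((SOME x. x \<in> ep_class K p a) @ tl (SOME x. x \<in> ep_class K p b))"
    using ep_class_some[OF assms(1)] ep_class_some[OF assms(2)] assms by (intro ep_eq_glue) auto
  then show ?thesis by (simp add: edge_path_group_def ep_class_eqI)
qed

section \<open>Tree paths in an acyclic graph\<close>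

context
  fixes E :: "'v set set" and p :: 'v
begin

definition reachable :: "'v \<Rightarrow> bool" where
  "reachable v \<longleftrightarrow> (\<exists>q. walk_between E p v q)"

definition distance :: "'v \<Rightarrow> nat" where
  "distance v = (LEAST n. \<exists>q. walk_between E p v q \<and> length q = Suc n)"

definition parent :: "'v \<Rightarrow> 'v" where
  "parent v = (SOME u. {u, v} \<in> E \<and> reachable u \<and> Suc (distance u) = distance v)"

fun parent_chain :: "nat \<Rightarrow> 'v \<Rightarrow> 'v list" where
  "parent_chain 0 v = [p]"
| "parent_chain (Suc n) v = parent_chain n (parent v) @ [v]"

definition tree_path :: "'v \<Rightarrow> 'v list" where
  "tree_path v = parent_chain (distance v) v"

lemma shortest_walk_exists:
  assumes "reachable v"
  shows "\<exists>q. walk_between E p v q \<and> length q = Suc (distance v)"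
proof -
  obtain q where q: "walk_between E p v q"
    using assms reachable_def by auto
  then have "length q = Suc (length q - 1)"
    by (cases q) (auto simp: walk_between_def)
  then have "\<exists>n q. walk_between E p v q \<and> length q = Suc n"
    using q by blast
  then show ?thesis
    unfolding distance_def by (rule LeastI_ex)
qed

lemma distance_le_length:
  assumes "walk_between E p v q"
  shows "distance v \<le> length q - 1"
proof -
  have "length q = Suc (length q - 1)"
    using assms by (cases q) (auto simp: walk_between_def)
  then show ?thesis
    unfolding distance_def using assms by (intro Least_le) auto
qed

lemma distance_nth_le:
  assumes "walk E q" "hd q = p" "i < length q"
  shows "reachable (q ! i) \<and> distance (q ! i) \<le> i"
proof -
  let ?t = "take (Suc i) q"
  have "hd ?t = p"
    using assms by (cases q) auto
  moreover have "last ?t = q ! i"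
    using assms by (simp add: take_Suc_conv_app_nth)
  ultimately have t: "walk_between E p (q ! i) ?t"
    using walk_take[OF assms(1,3)] by (simp add: walk_between_def)
  then show ?thesis
    using distance_le_length[OF t] assms(3) unfolding reachable_def by auto
qed

lemma reachable_root: "reachable p"
  unfolding reachable_def walk_between_def by (rule exI[of _ "[p]"]) simp

lemma distance_root: "distance p = 0"
  using distance_le_length[of p "[p]"] by (simp add: walk_between_def)

lemma distance_eq_0: "reachable v \<Longrightarrow> distance v = 0 \<Longrightarrow> v = p"
  using shortest_walk_exists[of v] by (auto simp: length_Suc_conv walk_between_def)

lemma reachable_edge:
  assumes "reachable u" "{u, v} \<in> E"
  shows "reachable v \<and> distance v \<le> Suc (distance u)"
proof -
  obtain q where q: "walk_between E p u q" "length q = Suc (distance u)"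
    using shortest_walk_exists[OF assms(1)] by blast
  have "walk_between E p v (q @ [v])"
    using q assms(2) walk_snoc[of E q v] by (cases q) (auto simp: walk_between_def)
  then show ?thesis
    using distance_le_length q reachable_def by fastforce
qed

lemma reachable_if_rtranclp: "(\<lambda>a b. {a, b} \<in> E)\<^sup>*\<^sup>* p x \<Longrightarrow> reachable x"
  by (induction rule: rtranclp_induct) (auto simp: reachable_root reachable_edge)

lemma parent:
  assumes "reachable v" "v \<noteq> p"
  shows "{parent v, v} \<in> E \<and> reachable (parent v) \<and> Suc (distance (parent v)) = distance v"
proof -
  obtain q where q: "walk_between E p v q" "length q = Suc (distance v)"
    using shortest_walk_exists[OF assms(1)] by blast
  obtain n where n: "distance v = Suc n"
    using distance_eq_0 assms by (cases "distance v") auto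
  have qq: "q = take n q @ [q ! n, q ! Suc n]"
    using q n by (metis Suc_lessD append.assoc append_Cons append_Nil lessI take_Suc_conv_app_nth
        take_all_iff le_refl)
  have "q \<noteq> []"
    using q by (auto simp: walk_between_def)
  then have "q ! Suc n = v"
    using q n last_conv_nth[of q] by (auto simp: walk_between_def)
  then have edge: "{q ! n, v} \<in> E"
    using q(1) qq walk_snoc_iff unfolding walk_between_def by metis
  have "reachable (q ! n) \<and> distance (q ! n) \<le> n"
    using distance_nth_le[of q n] q n by (simp add: walk_between_def)
  then have "{q ! n, v} \<in> E \<and> reachable (q ! n) \<and> Suc (distance (q ! n)) = distance v"
    using reachable_edge[of "q ! n" v] edge n by auto
  then show ?thesis
    unfolding parent_def by (rule someI)
qed

lemma walk_between_parent_chain: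
  "reachable v \<Longrightarrow> distance v = n \<Longrightarrow>
     walk_between E p v (parent_chain n v) \<and> length (parent_chain n v) = Suc n"
proof (induction n arbitrary: v)
  case 0
  then show ?case using distance_eq_0 by (auto simp: walk_between_def)
next
  case (Suc n)
  have "v \<noteq> p" using Suc distance_root by auto
  then have "{parent v, v} \<in> E" "reachable (parent v)" "distance (parent v) = n"
    using parent[OF Suc(2)] Suc(3) by auto
  then show ?case
    using Suc.IH[of "parent v"] walk_snoc[of E "parent_chain n (parent v)" v]
    by (auto simp: walk_between_def hd_append)
qed

lemma tree_path:
  "reachable v \<Longrightarrow> walk_between E p v (tree_path v) \<and> length (tree_path v) = Suc (distance v)"
  unfolding tree_path_def using walk_between_parent_chain by blast

lemma tree_path_root: "tree_path p = [p]"
  unfolding tree_path_def by (simp add: distance_root)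

lemma tree_path_parent:
  assumes "reachable v" "v \<noteq> p"
  shows "tree_path v = tree_path (parent v) @ [v]"
proof -
  have "distance v = Suc (distance (parent v))"
    using parent[OF assms] by simp
  then show ?thesis
    unfolding tree_path_def by simp
qed

end

lemma shortest_walk_distinct:
  assumes "walk E q"
    and "\<And>q'. walk E q' \<Longrightarrow> hd q' = hd q \<Longrightarrow> last q' = last q \<Longrightarrow> length q \<le> length q'"
  shows "distinct q"
proof (rule ccontr)
  assume "\<not> distinct q"
  then obtain xs y ys zs where q: "q = xs @ [y] @ ys @ [y] @ zs"
    using not_distinct_decomp by blast
  let ?q = "xs @ [y] @ zs"
  have "walk E ?q"
    using assms(1) q walk_append_iff[of E xs y "ys @ [y] @ zs"] walk_append_iff[of E "xs @ [y] @ ys" y zs]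
      walk_append_iff[of E xs y zs] by simp
  moreover have "hd ?q = hd q" "last ?q = last q"
    using q by (cases xs; cases zs; simp)+
  ultimately have "length q \<le> length ?q"
    using assms(2) by blast
  then show False using q by simp
qed

lemma acyclic_no_bypass:
  assumes "\<not> has_cycle E" "{u, v} \<in> E" "u \<noteq> v"
  shows "\<not> walk_between (E - {{u, v}}) u v q"
proof
  let ?E = "E - {{u, v}}"
  assume "walk_between ?E u v q"
  then have "\<exists>n q. walk_between ?E u v q \<and> length q = n" by blast
  from LeastI_ex[OF this] obtain q where q: "walk_between ?E u v q"
    and qmin: "length q = (LEAST n. \<exists>q. walk_between ?E u v q \<and> length q = n)"
    by blast
  have "distinct q"
  proof (rule shortest_walk_distinct)
    show "walk ?E q" using q by (simp add: walk_between_def)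
    fix q' assume "walk ?E q'" "hd q' = hd q" "last q' = last q"
    then show "length q \<le> length q'"
      unfolding qmin using q by (intro Least_le) (auto simp: walk_between_def)
  qed
  moreover have "length q \<ge> 3"
  proof (rule ccontr)
    assume "\<not> 3 \<le> length q"
    then consider "q = []" | a where "q = [a]" | a b where "q = [a, b]"
      by (cases q; cases "tl q"; auto simp: Suc_le_eq)
    then show False using q assms(3) by cases (auto simp: walk_between_def)
  qed
  moreover have "\<forall>i < length q - 1. {q ! i, q ! Suc i} \<in> E"
    using walk_mono[of ?E q E] q edge_path_iff_walk[of E q]
    by (auto simp: edge_path_def walk_between_def)
  moreover have "{last q, hd q} \<in> E"
    using q assms(2) by (simp add: walk_between_def insert_commute)
  ultimately show False
    using assms(1) unfolding has_cycle_def by blast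
qed

lemma vertex_not_on_tree_path:
  assumes "reachable E p w" "v \<noteq> w" "distance E p w \<le> distance E p v"
  shows "v \<notin> set (tree_path E p w)"
proof
  let ?t = "tree_path E p w"
  assume "v \<in> set ?t"
  then obtain i where i: "i < length ?t" "?t ! i = v"
    by (auto simp: in_set_conv_nth)
  have t: "walk_between E p w ?t" "length ?t = Suc (distance E p w)"
    using tree_path[OF assms(1)] by auto
  have "?t \<noteq> []"
    using t(2) by auto
  then have "i \<noteq> distance E p w"
    using t i assms(2) last_conv_nth[of ?t] by (auto simp: walk_between_def)
  then show False
    using distance_nth_le[of E ?t p i] t i assms(3) by (auto simp: walk_between_def)
qed

lemma acyclic_parent_edge:
  assumes acyclic: "\<not> has_cycle E" and uv: "{u, v} \<in> E" "u \<noteq> v"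
    and reach: "reachable E p u" "reachable E p v"
    and closer: "distance E p u \<le> distance E p v"
  shows "v \<noteq> p \<and> parent E p v = u"
proof -
  have vp: "v \<noteq> p"
    using closer distance_root[of E p] distance_eq_0[OF reach(1)] uv(2) by auto
  let ?w = "parent E p v" and ?E = "E - {{u, v}}"
  have w: "{?w, v} \<in> E" "reachable E p ?w" "Suc (distance E p ?w) = distance E p v"
    using parent[OF reach(2) vp] by auto
  have "?w \<noteq> v"
    using w(3) by auto
  have "?w = u"
  proof (rule ccontr)
    assume "?w \<noteq> u"
    then have "{?w, v} \<in> ?E"
      using w(1) uv(2) by (auto simp: doubleton_eq_iff)
    moreover have "walk_between ?E p ?w (tree_path E p ?w)"
      using tree_path[OF w(2)] vertex_not_on_tree_path[OF w(2), of v] w(3) \<open>?w \<noteq> v\<close>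
        walk_avoiding_edge[of E _ v "{u, v}"] by (auto simp: walk_between_def)
    ultimately have "walk_between ?E p v (tree_path E p ?w @ [v])"
      using walk_snoc[of ?E "tree_path E p ?w" v] by (auto simp: walk_between_def hd_append)
    moreover have "walk_between ?E p u (tree_path E p u)"
      using tree_path[OF reach(1)] vertex_not_on_tree_path[OF reach(1) uv(2)[symmetric] closer]
        walk_avoiding_edge[of E _ v "{u, v}"] by (auto simp: walk_between_def)
    then have "walk_between ?E u p (rev (tree_path E p u))"
      by (rule walk_between_rev)
    ultimately have "walk_between ?E u v (rev (tree_path E p u) @ tl (tree_path E p ?w @ [v]))"
      by (rule walk_between_glue[rotated])
    then show False
      using acyclic_no_bypass[OF acyclic uv] by blast
  qed
  then show ?thesis
    using vp by simp
qed

lemma acyclic_tree_path_edge: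
  assumes "\<not> has_cycle E" "{u, v} \<in> E" "u \<noteq> v" "reachable E p u" "reachable E p v"
  shows "tree_path E p v = tree_path E p u @ [v] \<or> tree_path E p u = tree_path E p v @ [u]"
proof (cases "distance E p u \<le> distance E p v")
  case True
  then show ?thesis
    using acyclic_parent_edge[OF assms True] tree_path_parent[OF assms(5)] by auto
next
  case False
  have "{v, u} \<in> E"
    using assms(2) by (simp add: insert_commute)
  then show ?thesis
    using acyclic_parent_edge[OF assms(1) _ assms(3)[symmetric] assms(5,4)] False
      tree_path_parent[OF assms(4)] by auto
qed

fun walk_word :: "'v list \<Rightarrow> ('v \<times> 'v) word" where
  "walk_word (x # y # r) = ((x, y), True) # walk_word (y # r)"
| "walk_word _ = []"

lemma walk_word_append: "walk_word (u @ x # v) = walk_word (u @ [x]) @ walk_word (x # v)"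
proof (induction u)
  case (Cons a u)
  then show ?case by (cases u) auto
qed simp

lemma walk_word_join:
  assumes "A \<noteq> []" "B \<noteq> []"
  shows "walk_word (A @ B) = walk_word A @ [((last A, hd B), True)] @ walk_word B"
proof -
  obtain A' a B' b where "A = A' @ [a]" "B = b # B'"
    using assms by (metis append_butlast_last_id list.exhaust)
  then show ?thesis
    using walk_word_append[of A' a "b # B'"] by simp
qed

lemma walk_word_glue:
  assumes "a \<noteq> []" "b \<noteq> []" "last a = hd b"
  shows "walk_word (a @ tl b) = walk_word a @ walk_word b"
proof -
  obtain a' x b' where "a = a' @ [x]" "b = x # b'"
    using assms by (metis append_butlast_last_id list.exhaust list.sel(1))
  then show ?thesis
    using walk_word_append[of a' x b'] by simp
qed

definition floating_gens :: "'v set set \<Rightarrow> ('v \<times> 'v) set" where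
  "floating_gens K = {(x, y). {x, y} \<in> K}"

definition floating_rels :: "'v set set \<Rightarrow> (('v \<times> 'v) word \<times> ('v \<times> 'v) word) set" where
  "floating_rels K = {([((x, z), True)], [((x, y), True), ((y, z), True)]) | x y z. {x, y, z} \<in> K}"

lemma floating_group_presentation:
  "floating_group K = presented_group (floating_gens K) (floating_rels K)"
  unfolding floating_group_def floating_gens_def floating_rels_def by (rule refl)

lemma floating_gens_iff [simp]: "(x, y) \<in> floating_gens K \<longleftrightarrow> {x, y} \<in> K"
  by (simp add: floating_gens_def)

lemma floating_relsI: "{x, y, z} \<in> K \<Longrightarrow> ([((x, z), True)], [((x, y), True), ((y, z), True)]) \<in> floating_rels K"
  unfolding floating_rels_def by blast

lemma walk_word_words: "walk K q \<Longrightarrow> walk_word q \<in> words (floating_gens K)"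
  by (induction K q rule: walk.induct) simp_all

text \<open>An arbitrary but fixed orientation of every edge, to read tree edges as floating generators.\<close>

definition orient :: "'v set \<Rightarrow> 'v \<times> 'v" where
  "orient e = (SOME ab. e = {fst ab, snd ab})"

lemma orient_doubleton: "{fst (orient {a, b}), snd (orient {a, b})} = {a, b}"
proof -
  have "\<exists>ab. {a, b} = {fst ab, snd ab}"
    by (rule exI[of _ "(a, b)"]) simp
  then show ?thesis
    unfolding orient_def by (rule someI_ex[THEN sym])
qed

lemma orient_cases: "orient {a, b} = (a, b) \<or> orient {a, b} = (b, a)"
  using orient_doubleton[of a b] by (cases "orient {a, b}") (auto simp: doubleton_eq_iff)

fun tree_word :: "'v list \<Rightarrow> 'v set word" where
  "tree_word (a # b # r) = ({a, b}, orient {a, b} = (a, b)) # tree_word (b # r)"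
| "tree_word _ = []"

lemma tree_word_snoc: "tree_word (u @ [x, y]) = tree_word (u @ [x]) @ [({x, y}, orient {x, y} = (x, y))]"
proof (induction u)
  case (Cons a u)
  then show ?case by (cases u) auto
qed simp

lemma tree_word_words: "walk E q \<Longrightarrow> tree_word q \<in> words E"
  by (induction E q rule: walk.induct) auto

lemma simplicial_complex_subset:
  "simplicial_complex K \<Longrightarrow> \<sigma> \<in> K \<Longrightarrow> \<tau> \<noteq> {} \<Longrightarrow> \<tau> \<subseteq> \<sigma> \<Longrightarrow> \<tau> \<in> K"
  unfolding simplicial_complex_def by blast

locale spanning_tree =
  fixes K :: "'v set set" and E :: "'v set set" and p :: 'v
  assumes complex: "simplicial_complex K"
    and tree: "spanning_tree_edges K E"
    and root: "p \<in> vertices K"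
begin

abbreviation "fl_eq \<equiv> pres_eq (floating_gens K) (floating_rels K)"
abbreviation "FE \<equiv> free_group E"
abbreviation "Pi1 \<equiv> edge_path_group K p"
abbreviation "free_class \<equiv> pres_class E ({} :: ('v set word \<times> 'v set word) set)"
abbreviation "loop_class \<equiv> ep_class K p"
abbreviation "gamma \<equiv> tree_path E p"

definition prod_gens :: "('v set word set + 'v list set) set" where
  "prod_gens = Inl ` carrier FE \<union> Inr ` carrier Pi1"

definition prod_rels :: "(('v set word set + 'v list set) word \<times> ('v set word set + 'v list set) word) set" where
  "prod_rels =
     {([(Inl a, True), (Inl b, True)], [(Inl (a \<otimes>\<^bsub>FE\<^esub> b), True)]) | a b. a \<in> carrier FE \<and> b \<in> carrier FE}
     \<union> {([(Inr a, True), (Inr b, True)], [(Inr (a \<otimes>\<^bsub>Pi1\<^esub> b), True)]) | a b. a \<in> carrier Pi1 \<and> b \<in> carrier Pi1}"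

abbreviation "prod_eq \<equiv> pres_eq prod_gens prod_rels"

lemma free_product_presentation: "free_product FE Pi1 = presented_group prod_gens prod_rels"
  unfolding free_product_def prod_gens_def prod_rels_def by (rule refl)

lemma tree_edges_subset: "E \<subseteq> K"
  using tree by (auto simp: spanning_tree_edges_def)

lemma tree_edge_card: "e \<in> E \<Longrightarrow> card e = 2"
  using tree by (auto simp: spanning_tree_edges_def)

lemma tree_edge_neq: "{u, v} \<in> E \<Longrightarrow> u \<noteq> v"
  using tree_edge_card[of "{u, v}"] by (cases "u = v") auto

lemma acyclic: "\<not> has_cycle E"
  using tree by (simp add: spanning_tree_edges_def)

lemma root_vertex: "p \<in> \<Union>K"
  using root by (simp add: vertices_def)

lemma edge_vertices: "{x, y} \<in> K \<Longrightarrow> x \<in> \<Union>K \<and> y \<in> \<Union>K"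
  by blast

lemma singleton_simplex: "x \<in> \<Union>K \<Longrightarrow> {x} \<in> K"
  using simplicial_complex_subset[OF complex] by blast

lemma vertex_reachable: "x \<in> \<Union>K \<Longrightarrow> reachable E p x"
  using tree root_vertex
  unfolding spanning_tree_edges_def graph_connected_def vertices_def
  by (blast intro: reachable_if_rtranclp)

lemma walk_between_gamma: "x \<in> \<Union>K \<Longrightarrow> walk_between E p x (gamma x) \<and> walk_between K p x (gamma x)"
  using tree_path[OF vertex_reachable] walk_mono[OF _ tree_edges_subset]
  by (auto simp: walk_between_def)

lemma gamma_not_Nil: "x \<in> \<Union>K \<Longrightarrow> gamma x \<noteq> []"
  using walk_between_gamma[of x] by (auto simp: walk_between_def)

lemma gamma_tree_edge: "{u, v} \<in> E \<Longrightarrow> gamma v = gamma u @ [v] \<or> gamma u = gamma v @ [u]"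
  using tree_edges_subset acyclic_tree_path_edge[OF acyclic _ tree_edge_neq] vertex_reachable
  by blast

lemma free_group_carrier: "carrier FE = free_class ` words E"
  by (simp add: free_group_def presented_group_carrier)

lemma free_group_mult: "a \<in> words E \<Longrightarrow> b \<in> words E \<Longrightarrow> free_class a \<otimes>\<^bsub>FE\<^esub> free_class b = free_class (a @ b)"
  unfolding free_group_def by (rule presented_group_mult_class)

lemma free_class_carrier: "w \<in> words E \<Longrightarrow> free_class w \<in> carrier FE"
  by (simp add: free_group_carrier)

lemma loop_class_carrier: "l \<in> edge_loops K p \<Longrightarrow> loop_class l \<in> carrier Pi1"
  by (simp add: edge_path_group_carrier)

lemma tree_word_gamma_words: "x \<in> \<Union>K \<Longrightarrow> tree_word (gamma x) \<in> words E"
  using tree_word_words walk_between_gamma by (auto simp: walk_between_def)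

section \<open>From the free product to the floating group\<close>

lemma fl_eq_degenerate_edge:
  assumes "x \<in> \<Union>K"
  shows "fl_eq [((x, x), True)] []"
proof -
  have "{x, x, x} \<in> K"
    using singleton_simplex[OF assms] by simp
  then have "fl_eq [((x, x), True)] [((x, x), True), ((x, x), True)]"
    by (rule pres_eq_relator[OF floating_relsI])
  then show ?thesis
    using singleton_simplex[OF assms] by (intro pres_eq_idempotent_letter) (auto intro: pres_eq_sym)
qed

lemma fl_eq_edge_inverse_pair:
  assumes "{x, y} \<in> K"
  shows "fl_eq [((x, y), True), ((y, x), True)] []"
proof -
  have "{x, y, x} \<in> K"
    using assms by (simp add: insert_commute)
  then have "fl_eq [((x, x), True)] [((x, y), True), ((y, x), True)]"
    by (rule pres_eq_relator[OF floating_relsI])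
  then show ?thesis
    using fl_eq_degenerate_edge[of x] assms by (blast intro: pres_eq_sym pres_eq_trans)
qed

lemma fl_eq_edge_inverse: "{x, y} \<in> K \<Longrightarrow> fl_eq [((x, y), False)] [((y, x), True)]"
  by (intro pres_eq_inverse_letter fl_eq_edge_inverse_pair) auto

lemma walk_word_rev: "walk K q \<Longrightarrow> fl_eq (walk_word (rev q)) (inv_word (walk_word q))"
proof (induction q rule: induct_list012)
  case (3 x y r)
  have xy: "{x, y} \<in> K" and "walk K (y # r)"
    using 3 by auto
  then have "fl_eq (walk_word (rev (y # r)) @ [((y, x), True)]) (inv_word (walk_word (y # r)) @ [((x, y), False)])"
    using 3 pres_eq_sym[OF fl_eq_edge_inverse[OF xy]] by (intro pres_eq_append) auto
  moreover have "walk_word (rev (x # y # r)) = walk_word (rev (y # r)) @ [((y, x), True)]"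
    using walk_word_join[of "rev (y # r)" "[x]"] by (simp add: last_rev)
  ultimately show ?case by simp
qed simp_all

definition edge_letter :: "'v set \<Rightarrow> ('v \<times> 'v) word" where
  "edge_letter e = [(orient e, True)]"

lemma edge_letter_words: "e \<in> E \<Longrightarrow> edge_letter e \<in> words (floating_gens K)"
proof -
  assume e: "e \<in> E"
  then obtain a b where "e = {a, b}"
    using tree_edge_card by (meson card_2_iff)
  then show ?thesis
    using orient_doubleton[of a b] e tree_edges_subset
    by (auto simp: edge_letter_def floating_gens_def case_prod_beta)
qed

lemma subst_edge_letter_tree_word: "walk E q \<Longrightarrow> fl_eq (subst_word edge_letter (tree_word q)) (walk_word q)"
proof (induction q rule: induct_list012)
  case (3 x y r)
  then have xy: "{x, y} \<in> K"
    using tree_edges_subset by auto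
  have "fl_eq (if orient {x, y} = (x, y) then edge_letter {x, y} else inv_word (edge_letter {x, y}))
      [((x, y), True)]"
    using orient_cases[of x y] fl_eq_edge_inverse[of y x] xy
    by (auto simp: edge_letter_def insert_commute)
  then show ?case
    using 3 pres_eq_append by fastforce
qed simp_all

text \<open>A one-vertex list is a walk in any complex; asking its vertex to be a vertex of \<open>K\<close>
  makes walks closed under both directions of the move that deletes a repeated vertex.\<close>

definition proper_walk :: "'v list \<Rightarrow> bool" where
  "proper_walk l \<longleftrightarrow> walk K l \<and> hd l \<in> \<Union>K"

lemma proper_walk_append_iff:
  "proper_walk (u @ x # v) \<longleftrightarrow> walk K (u @ [x]) \<and> walk K (x # v) \<and> hd (u @ [x]) \<in> \<Union>K"
  unfolding proper_walk_def walk_append_iff[of K u x v] by (cases u) auto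

lemma ep_step_proper_walk: "ep_step K a b \<Longrightarrow> proper_walk a \<longleftrightarrow> proper_walk b"
proof (induction rule: ep_step.induct)
  case (tri x y z u v)
  then have "{x, y} \<in> K" "{y, z} \<in> K" "{x, z} \<in> K"
    using simplicial_complex_subset[OF complex tri] by auto
  then show ?case
    using proper_walk_append_iff[of u x "y # z # v"] proper_walk_append_iff[of u x "z # v"] by auto
next
  case (dup u x v)
  have "x \<in> \<Union>K" if "walk K (u @ [x])" "hd (u @ [x]) \<in> \<Union>K"
    using that walk_set_subset[of K "u @ [x]"] by auto
  then show ?case
    using proper_walk_append_iff[of u x "x # v"] proper_walk_append_iff[of u x v] singleton_simplex
    by auto
qed

lemma ep_step_walk_word: "ep_step K a b \<Longrightarrow> walk K a \<Longrightarrow> fl_eq (walk_word a) (walk_word b)"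
proof (induction rule: ep_step.induct)
  case (tri x y z u v)
  have "fl_eq (walk_word (u @ [x]) @ [((x, y), True), ((y, z), True)] @ walk_word (z # v))
      (walk_word (u @ [x]) @ [((x, z), True)] @ walk_word (z # v))"
    by (rule pres_eq_sym, rule pres_eq_rel, rule floating_relsI, rule tri)
  then show ?case
    using walk_word_append[of u x "y # z # v"] walk_word_append[of u x "z # v"] by simp
next
  case (dup u x v)
  then have "{x} \<in> K"
    using walk_append_iff[of K u x "x # v"] by simp
  then have "fl_eq (walk_word (u @ [x]) @ [((x, x), True)] @ walk_word (x # v))
      (walk_word (u @ [x]) @ [] @ walk_word (x # v))"
    using fl_eq_degenerate_edge by (intro pres_eq_cong) blast
  then show ?case
    using walk_word_append[of u x "x # v"] walk_word_append[of u x v] by simp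
qed

lemma ep_eq_walk_word:
  "ep_eq K a b \<Longrightarrow> proper_walk a \<Longrightarrow> proper_walk b \<and> fl_eq (walk_word a) (walk_word b)"
  unfolding ep_eq_def
proof (induction rule: rtranclp_induct)
  case (step y z)
  then have "proper_walk y" "fl_eq (walk_word a) (walk_word y)"
    by auto
  moreover have "proper_walk z \<and> fl_eq (walk_word y) (walk_word z)"
    using step(2) \<open>proper_walk y\<close> ep_step_proper_walk ep_step_walk_word pres_eq_sym
    unfolding proper_walk_def by blast
  ultimately show ?case
    using pres_eq_trans by blast
qed simp

definition to_floating :: "'v set word set + 'v list set \<Rightarrow> ('v \<times> 'v) word" where
  "to_floating t = (case t of
     Inl A \<Rightarrow> subst_word edge_letter (SOME a. a \<in> A)
   | Inr B \<Rightarrow> walk_word (SOME b. b \<in> B))"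

lemma to_floating_Inl:
  assumes "w \<in> words E"
  shows "fl_eq (to_floating (Inl (free_class w))) (subst_word edge_letter w)
    \<and> to_floating (Inl (free_class w)) \<in> words (floating_gens K)"
proof -
  let ?r = "SOME a. a \<in> free_class w"
  have r: "pres_eq E {} w ?r" "?r \<in> words E"
    using pres_class_some[OF assms] by auto
  have "fl_eq (subst_word edge_letter w) (subst_word edge_letter ?r)"
    by (rule pres_eq_subst_word[OF _ _ r(1)]) (auto simp: edge_letter_words)
  moreover have "subst_word edge_letter ?r \<in> words (floating_gens K)"
    using words_subst_word[OF r(2)] edge_letter_words by blast
  ultimately show ?thesis
    by (simp add: to_floating_def pres_eq_sym)
qed

lemma to_floating_Inr:
  assumes "l \<in> edge_loops K p"
  shows "fl_eq (to_floating (Inr (loop_class l))) (walk_word l)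
    \<and> to_floating (Inr (loop_class l)) \<in> words (floating_gens K)"
proof -
  let ?r = "SOME a. a \<in> loop_class l"
  have r: "ep_eq K l ?r" "?r \<in> edge_loops K p"
    using ep_class_some[OF assms] by auto
  have "proper_walk l"
    using assms root_vertex by (simp add: edge_loops_iff walk_between_def proper_walk_def)
  then have "fl_eq (walk_word l) (walk_word ?r)"
    using ep_eq_walk_word[OF r(1)] by blast
  moreover have "walk_word ?r \<in> words (floating_gens K)"
    using r(2) walk_word_words by (auto simp: edge_loops_iff walk_between_def)
  ultimately show ?thesis
    by (simp add: to_floating_def pres_eq_sym)
qed

lemma to_floating_words: "t \<in> prod_gens \<Longrightarrow> to_floating t \<in> words (floating_gens K)"
  using to_floating_Inl to_floating_Inr
  by (auto simp: prod_gens_def free_group_carrier edge_path_group_carrier)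

lemma to_floating_Inl_mult:
  assumes "a \<in> carrier FE" "b \<in> carrier FE"
  shows "fl_eq (to_floating (Inl a) @ to_floating (Inl b)) (to_floating (Inl (a \<otimes>\<^bsub>FE\<^esub> b)))"
proof -
  obtain wa wb where w: "wa \<in> words E" "wb \<in> words E" "a = free_class wa" "b = free_class wb"
    using assms by (auto simp: free_group_carrier)
  then have "a \<otimes>\<^bsub>FE\<^esub> b = free_class (wa @ wb)"
    by (simp add: free_group_mult)
  then show ?thesis
    using w to_floating_Inl[of wa] to_floating_Inl[of wb] to_floating_Inl[of "wa @ wb"]
    by (auto intro: pres_eq_sym pres_eq_trans pres_eq_append)
qed

lemma to_floating_Inr_mult:
  assumes "a \<in> carrier Pi1" "b \<in> carrier Pi1"
  shows "fl_eq (to_floating (Inr a) @ to_floating (Inr b)) (to_floating (Inr (a \<otimes>\<^bsub>Pi1\<^esub> b)))"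
proof -
  obtain la lb where w: "la \<in> edge_loops K p" "lb \<in> edge_loops K p" "a = loop_class la" "b = loop_class lb"
    using assms by (auto simp: edge_path_group_carrier)
  then have "a \<otimes>\<^bsub>Pi1\<^esub> b = loop_class (la @ tl lb)" "la @ tl lb \<in> edge_loops K p"
    by (simp_all add: edge_path_group_mult_class edge_loops_glue)
  moreover have "walk_word (la @ tl lb) = walk_word la @ walk_word lb"
    using w by (intro walk_word_glue) (auto simp: edge_loops_iff walk_between_def)
  ultimately show ?thesis
    using w to_floating_Inr[of la] to_floating_Inr[of lb] to_floating_Inr[of "la @ tl lb"]
    by (auto intro: pres_eq_sym pres_eq_trans pres_eq_append)
qed

lemma to_floating_relator:
  "(l, r) \<in> prod_rels \<Longrightarrow> fl_eq (subst_word to_floating l) (subst_word to_floating r)"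
  unfolding prod_rels_def by (auto simp: to_floating_Inl_mult to_floating_Inr_mult)

section \<open>From the floating group to the free product\<close>

lemma prod_gens_Inl: "A \<in> carrier FE \<Longrightarrow> Inl A \<in> prod_gens"
  by (simp add: prod_gens_def)

lemma prod_gens_Inr: "B \<in> carrier Pi1 \<Longrightarrow> Inr B \<in> prod_gens"
  by (simp add: prod_gens_def)

lemma prod_eq_Inl_mult:
  "a \<in> carrier FE \<Longrightarrow> b \<in> carrier FE \<Longrightarrow> prod_eq [(Inl a, True), (Inl b, True)] [(Inl (a \<otimes>\<^bsub>FE\<^esub> b), True)]"
  by (rule pres_eq_relator) (unfold prod_rels_def, blast)

lemma prod_eq_Inr_mult:
  "a \<in> carrier Pi1 \<Longrightarrow> b \<in> carrier Pi1 \<Longrightarrow> prod_eq [(Inr a, True), (Inr b, True)] [(Inr (a \<otimes>\<^bsub>Pi1\<^esub> b), True)]"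
  by (rule pres_eq_relator) (unfold prod_rels_def, blast)

lemma prod_eq_Inl_one: "prod_eq [(Inl (free_class []), True)] []"
proof -
  have c: "free_class [] \<in> carrier FE"
    by (simp add: free_class_carrier)
  have "free_class [] \<otimes>\<^bsub>FE\<^esub> free_class [] = free_class []"
    using free_group_mult[of "[]" "[]"] by simp
  then show ?thesis
    using prod_eq_Inl_mult[OF c c] prod_gens_Inl[OF c] by (intro pres_eq_idempotent_letter) auto
qed

lemma prod_eq_Inl_one_inv: "prod_eq [(Inl (free_class []), False)] []"
  using pres_eq_inv_word[OF _ _ prod_eq_Inl_one] prod_gens_Inl[OF free_class_carrier] by simp

lemma root_loop: "[p] \<in> edge_loops K p"
  by (simp add: edge_loops_iff walk_between_def)

lemma prod_eq_Inr_one: "prod_eq [(Inr (loop_class [p]), True)] []"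
proof -
  have c: "loop_class [p] \<in> carrier Pi1"
    by (rule loop_class_carrier[OF root_loop])
  have "loop_class [p] \<otimes>\<^bsub>Pi1\<^esub> loop_class [p] = loop_class [p]"
    using edge_path_group_mult_class[OF root_loop root_loop] by simp
  then show ?thesis
    using prod_eq_Inr_mult[OF c c] prod_gens_Inr[OF c] by (intro pres_eq_idempotent_letter) auto
qed

lemma prod_eq_Inl_letter_pair:
  assumes "e \<in> E"
  shows "prod_eq [(Inl (free_class [(e, b)]), True), (Inl (free_class [(e, \<not> b)]), True)] []"
proof -
  have w: "[(e, b)] \<in> words E" "[(e, \<not> b)] \<in> words E"
    using assms by auto
  have "free_class [(e, b)] \<otimes>\<^bsub>FE\<^esub> free_class [(e, \<not> b)] = free_class ([(e, b)] @ [(e, \<not> b)])"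
    using free_group_mult[OF w] .
  also have "\<dots> = free_class []"
    by (rule pres_class_eqI) (simp add: pres_eq_cancel_pair[OF assms])
  finally show ?thesis
    using prod_eq_Inl_mult[OF free_class_carrier[OF w(1)] free_class_carrier[OF w(2)]] prod_eq_Inl_one
    by (auto intro: pres_eq_trans)
qed

lemma prod_eq_Inl_letters:
  "w \<in> words E \<Longrightarrow> prod_eq (map (\<lambda>(e, b). (Inl (free_class [(e, True)]), b)) w) [(Inl (free_class w), True)]"
proof (induction w)
  case Nil
  then show ?case using prod_eq_Inl_one pres_eq_sym by simp
next
  case (Cons x w)
  obtain e b where x: "x = (e, b)" by force
  have e: "e \<in> E" and w: "w \<in> words E"
    using Cons x by auto
  have we: "[(e, b)] \<in> words E" "[(e, True)] \<in> words E"
    using e by auto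
  have "prod_eq [(Inl (free_class [(e, True)]), b)] [(Inl (free_class [(e, b)]), True)]"
  proof (cases b)
    case False
    then show ?thesis
      using pres_eq_inverse_letter[OF prod_gens_Inl[OF free_class_carrier[OF we(2)]]
          prod_eq_Inl_letter_pair[OF e]] by simp
  qed simp
  then have "prod_eq ([(Inl (free_class [(e, True)]), b)] @ map (\<lambda>(e, b). (Inl (free_class [(e, True)]), b)) w)
      ([(Inl (free_class [(e, b)]), True)] @ [(Inl (free_class w), True)])"
    using Cons.IH[OF w] by (rule pres_eq_append)
  also have "prod_eq \<dots> [(Inl (free_class [(e, b)] \<otimes>\<^bsub>FE\<^esub> free_class w), True)]"
    using prod_eq_Inl_mult[OF free_class_carrier[OF we(1)] free_class_carrier[OF w]] by simp
  also have "free_class [(e, b)] \<otimes>\<^bsub>FE\<^esub> free_class w = free_class (x # w)"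
    using free_group_mult[OF we(1) w] x by simp
  finally show ?case
    using x by simp
qed

lemma gamma_butlast_snoc:
  assumes "x \<in> \<Union>K"
  shows "butlast (gamma x) @ [x] = gamma x"
proof -
  have "gamma x \<noteq> []" "last (gamma x) = x"
    using walk_between_gamma[OF assms] gamma_not_Nil[OF assms] by (auto simp: walk_between_def)
  then show ?thesis
    by (metis append_butlast_last_id)
qed

lemma loop_class_backtrack: "x \<in> \<Union>K \<Longrightarrow> loop_class (gamma x @ tl (rev (gamma x))) = loop_class [p]"
  using ep_eq_backtrack[of K "gamma x" "[]" "[]"] walk_between_gamma[of x]
  by (simp add: walk_between_def ep_class_eqI)

definition closed_loop :: "'v list \<Rightarrow> 'v list" where
  "closed_loop q = gamma (hd q) @ tl q @ tl (rev (gamma (last q)))"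

lemma closed_loop_edge_loop:
  assumes "walk_between K a b q" "a \<in> \<Union>K"
  shows "closed_loop q \<in> edge_loops K p"
proof -
  have "b \<in> \<Union>K"
    using walk_between_end_vertex[OF assms] .
  then have "walk_between K p p ((gamma a @ tl q) @ tl (rev (gamma b)))"
    using assms walk_between_gamma by (blast intro: walk_between_glue walk_between_rev)
  then show ?thesis
    using assms(1) by (simp add: closed_loop_def edge_loops_iff walk_between_def)
qed

lemma closed_loop_of_loop: "q \<in> edge_loops K p \<Longrightarrow> closed_loop q = q"
  by (cases q) (auto simp: closed_loop_def edge_loops_iff walk_between_def tree_path_root)

lemma closed_loop_single: "x \<in> \<Union>K \<Longrightarrow> loop_class (closed_loop [x]) = loop_class [p]"
  by (simp add: closed_loop_def loop_class_backtrack)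

lemma closed_loop_glue:
  assumes q: "walk_between K a b q" and q': "walk_between K b c q'" and a: "a \<in> \<Union>K"
  shows "ep_eq K (closed_loop q @ tl (closed_loop q')) (closed_loop (q @ tl q'))"
proof -
  let ?P = "gamma a @ tl q"
  have b: "b \<in> \<Union>K"
    using walk_between_end_vertex[OF q a] .
  have P: "walk_between K p b ?P"
    using walk_between_glue[OF conjunct2[OF walk_between_gamma[OF a]] q] .
  have gb: "walk_between K p b (gamma b)"
    using walk_between_gamma[OF b] by blast
  have "closed_loop q = butlast ?P @ rev (gamma b)"
    using q P gb gamma_not_Nil[OF a] gamma_not_Nil[OF b]
      append_tl_eq_butlast_append[of ?P "rev (gamma b)"]
    by (auto simp: closed_loop_def walk_between_def hd_rev)
  moreover have "tl (closed_loop q') = tl (gamma b) @ tl q' @ tl (rev (gamma (last q')))"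
    using q' gamma_not_Nil[OF b] by (auto simp: closed_loop_def walk_between_def)
  ultimately have "closed_loop q @ tl (closed_loop q')
      = butlast ?P @ rev (gamma b) @ tl (rev (rev (gamma b))) @ (tl q' @ tl (rev (gamma (last q'))))"
    by simp
  also have "ep_eq K \<dots> (butlast ?P @ [b] @ (tl q' @ tl (rev (gamma (last q')))))"
    using ep_eq_backtrack[of K "rev (gamma b)"] gb by (auto simp: walk_between_def hd_rev)
  also have "\<dots> = ?P @ tl q' @ tl (rev (gamma (last q')))"
    using P gamma_not_Nil[OF a] append_butlast_last_id[of ?P] by (auto simp: walk_between_def)
  also have "\<dots> = closed_loop (q @ tl q')"
    using q q' walk_between_glue[OF q q'] by (cases q) (auto simp: closed_loop_def walk_between_def)
  finally show ?thesis .
qed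

lemma closed_loop_mult:
  assumes "walk_between K a b q" "walk_between K b c q'" "a \<in> \<Union>K"
  shows "loop_class (closed_loop q) \<otimes>\<^bsub>Pi1\<^esub> loop_class (closed_loop q') = loop_class (closed_loop (q @ tl q'))"
  using edge_path_group_mult_class[OF closed_loop_edge_loop[OF assms(1,3)]
      closed_loop_edge_loop[OF assms(2) walk_between_end_vertex[OF assms(1,3)]]]
    ep_class_eqI[OF closed_loop_glue[OF assms]] by simp

lemma closed_loop_triangle:
  assumes "{x, y, z} \<in> K" "x \<in> \<Union>K"
  shows "ep_eq K (closed_loop [x, y, z]) (closed_loop [x, z])"
proof -
  note gx = gamma_butlast_snoc[OF assms(2)]
  have "closed_loop [x, y, z] = (butlast (gamma x) @ [x]) @ [y, z] @ tl (rev (gamma z))"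
    by (simp only: gx) (simp add: closed_loop_def)
  also have "\<dots> = butlast (gamma x) @ [x, y, z] @ tl (rev (gamma z))"
    by simp
  also have "ep_eq K \<dots> (butlast (gamma x) @ [x, z] @ tl (rev (gamma z)))"
    by (rule ep_eq_tri[OF assms(1)])
  also have "\<dots> = (butlast (gamma x) @ [x]) @ [z] @ tl (rev (gamma z))"
    by simp
  also have "\<dots> = closed_loop [x, z]"
    by (simp only: gx) (simp add: closed_loop_def)
  finally show ?thesis .
qed

lemma closed_loop_tree_edge:
  assumes "{u, v} \<in> E"
  shows "loop_class (closed_loop [u, v]) = loop_class [p]"
proof -
  have uv: "u \<in> \<Union>K" "v \<in> \<Union>K"
    using assms tree_edges_subset by auto
  consider "gamma v = gamma u @ [v]" | "gamma u = gamma v @ [u]"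
    using gamma_tree_edge[OF assms] by blast
  then show ?thesis
  proof cases
    case 1
    then have "closed_loop [u, v] = gamma v @ tl (rev (gamma v))"
      using gamma_not_Nil[OF uv(1)] by (simp add: closed_loop_def)
    then show ?thesis using loop_class_backtrack[OF uv(2)] by simp
  next
    case 2
    then have "closed_loop [u, v] = gamma u @ tl (rev (gamma u))"
      using gamma_not_Nil[OF uv(2)] walk_between_gamma[OF uv(2)]
      by (simp add: closed_loop_def walk_between_def)
        (metis hd_rev list.collapse rev_is_Nil_conv)
    then show ?thesis using loop_class_backtrack[OF uv(1)] by simp
  qed
qed

definition tree_elem :: "'v \<Rightarrow> 'v set word set" where
  "tree_elem v = free_class (tree_word (gamma v))"

lemma tree_elem_carrier: "x \<in> \<Union>K \<Longrightarrow> tree_elem x \<in> carrier FE"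
  unfolding tree_elem_def by (rule free_class_carrier[OF tree_word_gamma_words])

lemma tree_elem_root: "tree_elem p = free_class []"
  by (simp add: tree_elem_def tree_path_root)

lemma prod_eq_tree_elem_step:
  assumes e: "{u, v} \<in> E" and grow: "gamma v = gamma u @ [v]"
  shows "prod_eq [(Inl (tree_elem u), False), (Inl (tree_elem v), True)]
    [(Inl (free_class [({u, v}, orient {u, v} = (u, v))]), True)]"
    (is "prod_eq _ [(Inl ?e, True)]")
proof -
  have u: "u \<in> \<Union>K"
    using e tree_edges_subset by auto
  have ew: "[({u, v}, orient {u, v} = (u, v))] \<in> words E"
    using e by simp
  have "gamma v = butlast (gamma u) @ [u, v]"
    using grow gamma_butlast_snoc[OF u] by (metis append_assoc append_Cons append_Nil)
  then have "tree_word (gamma v) = tree_word (gamma u) @ [({u, v}, orient {u, v} = (u, v))]"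
    using tree_word_snoc[of "butlast (gamma u)" u v] gamma_butlast_snoc[OF u] by simp
  then have v: "tree_elem v = tree_elem u \<otimes>\<^bsub>FE\<^esub> ?e"
    unfolding tree_elem_def using free_group_mult[OF tree_word_gamma_words[OF u] ew] by simp
  have "prod_eq ([(Inl (tree_elem u), False)] @ [(Inl (tree_elem v), True)] @ [])
      ([(Inl (tree_elem u), False)] @ [(Inl (tree_elem u), True), (Inl ?e, True)] @ [])"
    unfolding v
    by (rule pres_eq_cong, rule pres_eq_sym, rule prod_eq_Inl_mult[OF tree_elem_carrier[OF u]
          free_class_carrier[OF ew]])
  also have "prod_eq \<dots> ([] @ [(Inl ?e, True)])"
    using pres_eq_cancel[OF prod_gens_Inl[OF tree_elem_carrier[OF u]], of prod_rels "[]" False]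
    by simp
  finally show ?thesis by simp
qed

definition to_product :: "'v \<times> 'v \<Rightarrow> ('v set word set + 'v list set) word" where
  "to_product s = [(Inl (tree_elem (fst s)), False), (Inr (loop_class (closed_loop [fst s, snd s])), True),
     (Inl (tree_elem (snd s)), True)]"

lemma to_product_words: "s \<in> floating_gens K \<Longrightarrow> to_product s \<in> words prod_gens"
  using closed_loop_edge_loop[OF walk_between_edge] edge_vertices
  by (auto simp: to_product_def floating_gens_def tree_elem_carrier prod_gens_Inl prod_gens_Inr
      loop_class_carrier)

lemma prod_eq_telescope:
  assumes "y \<in> \<Union>K" "A \<in> carrier Pi1" "B \<in> carrier Pi1"
  shows "prod_eq ([(Inl (tree_elem x), False), (Inr A, True), (Inl (tree_elem y), True)]
      @ [(Inl (tree_elem y), False), (Inr B, True), (Inl (tree_elem z), True)])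
    [(Inl (tree_elem x), False), (Inr (A \<otimes>\<^bsub>Pi1\<^esub> B), True), (Inl (tree_elem z), True)]"
proof -
  have "prod_eq ([(Inl (tree_elem x), False), (Inr A, True)] @ [(Inl (tree_elem y), True), (Inl (tree_elem y), \<not> True)]
      @ [(Inr B, True), (Inl (tree_elem z), True)])
    ([(Inl (tree_elem x), False), (Inr A, True)] @ [(Inr B, True), (Inl (tree_elem z), True)])"
    by (rule pres_eq_cancel[OF prod_gens_Inl[OF tree_elem_carrier[OF assms(1)]]])
  also have "\<dots> = [(Inl (tree_elem x), False)] @ [(Inr A, True), (Inr B, True)] @ [(Inl (tree_elem z), True)]"
    by simp
  also have "prod_eq \<dots> ([(Inl (tree_elem x), False)] @ [(Inr (A \<otimes>\<^bsub>Pi1\<^esub> B), True)] @ [(Inl (tree_elem z), True)])"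
    by (rule pres_eq_cong, rule prod_eq_Inr_mult[OF assms(2,3)])
  finally show ?thesis by simp
qed

lemma to_product_relator:
  assumes "(l, r) \<in> floating_rels K"
  shows "prod_eq (subst_word to_product l) (subst_word to_product r)"
proof -
  obtain x y z where l: "l = [((x, z), True)]" "r = [((x, y), True), ((y, z), True)]" "{x, y, z} \<in> K"
    using assms by (auto simp: floating_rels_def)
  have e: "{x, y} \<in> K" "{y, z} \<in> K"
    using simplicial_complex_subset[OF complex l(3)] by auto
  then have v: "x \<in> \<Union>K" "y \<in> \<Union>K"
    by auto
  have "loop_class (closed_loop [x, y]) \<otimes>\<^bsub>Pi1\<^esub> loop_class (closed_loop [y, z]) = loop_class (closed_loop [x, z])"
    using closed_loop_mult[OF walk_between_edge[OF e(1)] walk_between_edge[OF e(2)] v(1)]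
      ep_class_eqI[OF closed_loop_triangle[OF l(3) v(1)]] by simp
  then show ?thesis
    using prod_eq_telescope[OF v(2), of "loop_class (closed_loop [x, y])" "loop_class (closed_loop [y, z])" x z]
      closed_loop_edge_loop[OF walk_between_edge[OF e(1)] v(1)]
      closed_loop_edge_loop[OF walk_between_edge[OF e(2)] v(2)]
    by (auto simp: l to_product_def loop_class_carrier intro: pres_eq_sym)
qed

lemma to_product_walk_word:
  "walk_between K a b q \<Longrightarrow> a \<in> \<Union>K \<Longrightarrow> prod_eq (subst_word to_product (walk_word q))
     [(Inl (tree_elem a), False), (Inr (loop_class (closed_loop q)), True), (Inl (tree_elem b), True)]"
proof (induction q arbitrary: a rule: induct_list012)
  case 1
  then show ?case by (simp add: walk_between_def)
next
  case (2 x)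
  then have ab: "a = x" "b = x"
    by (auto simp: walk_between_def)
  have "prod_eq ([(Inl (tree_elem x), False)] @ [(Inr (loop_class (closed_loop [x])), True)] @ [(Inl (tree_elem x), True)])
      ([(Inl (tree_elem x), False)] @ [] @ [(Inl (tree_elem x), True)])"
    using closed_loop_single 2 ab prod_eq_Inr_one by (intro pres_eq_cong) simp
  also have "prod_eq \<dots> []"
    using pres_eq_cancel_pair[OF prod_gens_Inl[OF tree_elem_carrier], of x prod_rels False] 2 ab by simp
  finally show ?case
    using ab by (simp add: pres_eq_sym)
next
  case (3 x y r)
  have ax: "a = x" and xy: "{x, y} \<in> K" and q': "walk_between K y b (y # r)"
    using "3.prems"(1) by (auto simp: walk_between_def)
  have v: "x \<in> \<Union>K" "y \<in> \<Union>K"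
    using xy by auto
  have "subst_word to_product (walk_word (x # y # r)) = to_product (x, y) @ subst_word to_product (walk_word (y # r))"
    by simp
  also have "prod_eq \<dots> (to_product (x, y)
      @ [(Inl (tree_elem y), False), (Inr (loop_class (closed_loop (y # r))), True), (Inl (tree_elem b), True)])"
    using pres_eq_cong[OF "3.IH"(2)[OF q' v(2)], of "to_product (x, y)" "[]"] by simp
  also have "prod_eq \<dots> [(Inl (tree_elem x), False),
      (Inr (loop_class (closed_loop [x, y]) \<otimes>\<^bsub>Pi1\<^esub> loop_class (closed_loop (y # r))), True), (Inl (tree_elem b), True)]"
    unfolding to_product_def fst_conv snd_conv
    by (rule prod_eq_telescope[OF v(2) loop_class_carrier loop_class_carrier])
      (use closed_loop_edge_loop walk_between_edge[OF xy] q' v in blast)+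
  also have "loop_class (closed_loop [x, y]) \<otimes>\<^bsub>Pi1\<^esub> loop_class (closed_loop (y # r)) = loop_class (closed_loop (x # y # r))"
    using closed_loop_mult[OF walk_between_edge[OF xy] q' v(1)] by simp
  finally show ?case
    using ax by simp
qed

lemma to_product_edge_letter:
  assumes e: "e \<in> E"
  shows "prod_eq (subst_word to_product (edge_letter e)) [(Inl (free_class [(e, True)]), True)]"
proof -
  obtain a b where "e = {a, b}"
    using tree_edge_card[OF e] by (meson card_2_iff)
  moreover obtain u v where uv: "orient e = (u, v)"
    by force
  ultimately have euv: "e = {u, v}"
    using orient_doubleton[of a b] by simp
  have uv_edge: "{u, v} \<in> E"
    using e euv by simp
  then have "u \<noteq> v" "u \<in> \<Union>K" "v \<in> \<Union>K"
    using tree_edge_neq tree_edges_subset by auto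
  have "prod_eq ([(Inl (tree_elem u), False)] @ [(Inr (loop_class [p]), True)] @ [(Inl (tree_elem v), True)])
      ([(Inl (tree_elem u), False)] @ [] @ [(Inl (tree_elem v), True)])"
    by (rule pres_eq_cong, rule prod_eq_Inr_one)
  then have "prod_eq (to_product (u, v)) [(Inl (tree_elem u), False), (Inl (tree_elem v), True)]"
    by (simp add: to_product_def closed_loop_tree_edge[OF uv_edge])
  moreover have "prod_eq [(Inl (tree_elem u), False), (Inl (tree_elem v), True)] [(Inl (free_class [(e, True)]), True)]"
  proof (cases "gamma v = gamma u @ [v]")
    case True
    then show ?thesis
      using prod_eq_tree_elem_step[OF uv_edge] uv euv by simp
  next
    case False
    then have "gamma u = gamma v @ [u]"
      using gamma_tree_edge[OF uv_edge] by blast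
    then have "prod_eq [(Inl (tree_elem v), False), (Inl (tree_elem u), True)] [(Inl (free_class [(e, False)]), True)]"
      using prod_eq_tree_elem_step[of v u] uv_edge uv euv \<open>u \<noteq> v\<close> by (simp add: insert_commute)
    then have "prod_eq (inv_word [(Inl (tree_elem v), False), (Inl (tree_elem u), True)])
        (inv_word [(Inl (free_class [(e, False)]), True)])"
      by (rule pres_eq_inv_word[rotated 2])
        (use prod_gens_Inl tree_elem_carrier free_class_carrier e \<open>u \<in> \<Union>K\<close> \<open>v \<in> \<Union>K\<close> in auto)
    then have "prod_eq [(Inl (tree_elem u), False), (Inl (tree_elem v), True)] [(Inl (free_class [(e, False)]), False)]"
      by simp
    also have "prod_eq \<dots> [(Inl (free_class [(e, True)]), True)]"
      using pres_eq_inverse_letter[OF prod_gens_Inl prod_eq_Inl_letter_pair[OF e, of False]] e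
        free_class_carrier by simp
    finally show ?thesis .
  qed
  ultimately show ?thesis
    using uv by (auto simp: edge_letter_def intro: pres_eq_trans)
qed

lemma to_product_to_floating_Inl:
  assumes "A \<in> carrier FE"
  shows "prod_eq (subst_word to_product (to_floating (Inl A))) [(Inl A, True)]"
proof -
  obtain w where w: "w \<in> words E" "A = free_class w"
    using assms by (auto simp: free_group_carrier)
  let ?r = "SOME a. a \<in> free_class w"
  have r: "pres_eq E {} w ?r" "?r \<in> words E"
    using pres_class_some[OF w(1)] by auto
  have "subst_word to_product (to_floating (Inl A)) = subst_word (\<lambda>e. subst_word to_product (edge_letter e)) ?r"
    using w by (simp add: to_floating_def subst_word_subst_word)
  also have "prod_eq \<dots> (map (\<lambda>(e, b). (Inl (free_class [(e, True)]), b)) ?r)"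
  proof (rule pres_eq_subst_word_letters[OF r(2)])
    fix e assume e: "e \<in> E"
    show "subst_word to_product (edge_letter e) \<in> words prod_gens"
      by (rule words_subst_word[OF edge_letter_words[OF e]]) (simp add: to_product_words)
    show "Inl (free_class [(e, True)]) \<in> prod_gens"
      using e by (intro prod_gens_Inl free_class_carrier) auto
    show "prod_eq (subst_word to_product (edge_letter e)) [(Inl (free_class [(e, True)]), True)]"
      by (rule to_product_edge_letter[OF e])
  qed
  also have "prod_eq \<dots> [(Inl (free_class ?r), True)]"
    by (rule prod_eq_Inl_letters[OF r(2)])
  finally show ?thesis
    using w pres_class_eqI[OF r(1)] by simp
qed

lemma to_product_to_floating_Inr:
  assumes "B \<in> carrier Pi1"
  shows "prod_eq (subst_word to_product (to_floating (Inr B))) [(Inr B, True)]"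
proof -
  obtain l where l: "l \<in> edge_loops K p" "B = loop_class l"
    using assms by (auto simp: edge_path_group_carrier)
  let ?r = "SOME a. a \<in> loop_class l"
  have r: "ep_eq K l ?r" "?r \<in> edge_loops K p"
    using ep_class_some[OF l(1)] by auto
  have B: "B = loop_class ?r"
    using l(2) ep_class_eqI[OF r(1)] by (rule trans)
  have "walk_between K p p ?r"
    using r(2) by (simp add: edge_loops_iff)
  then have "prod_eq (subst_word to_product (walk_word ?r))
      ([(Inl (free_class []), False)] @ [(Inr B, True)] @ [(Inl (free_class []), True)])"
    using to_product_walk_word[OF _ root_vertex, of p ?r] closed_loop_of_loop[OF r(2)] tree_elem_root B
    by simp
  also have "prod_eq \<dots> ([] @ [(Inr B, True)] @ [])"
    by (intro pres_eq_append prod_eq_Inl_one_inv prod_eq_Inl_one pres_eq_refl)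
  finally show ?thesis
    using l by (simp add: to_floating_def)
qed

lemma to_product_to_floating: "t \<in> prod_gens \<Longrightarrow> prod_eq (subst_word to_product (to_floating t)) [(t, True)]"
  using to_product_to_floating_Inl to_product_to_floating_Inr by (auto simp: prod_gens_def)

lemma to_floating_to_product:
  assumes "s \<in> floating_gens K"
  shows "fl_eq (subst_word to_floating (to_product s)) [(s, True)]"
proof -
  obtain x y where s: "s = (x, y)" "{x, y} \<in> K"
    using assms by (auto simp: floating_gens_def)
  have v: "x \<in> \<Union>K" "y \<in> \<Union>K"
    using s by auto
  let ?P = "walk_word (gamma x)" and ?Q = "walk_word (gamma y)"
  have walks: "walk E (gamma x)" "walk E (gamma y)" "walk K (gamma x)" "walk K (gamma y)"
    using walk_between_gamma v by (auto simp: walk_between_def)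
  then have PQ: "?P \<in> words (floating_gens K)" "?Q \<in> words (floating_gens K)"
    using walk_word_words by auto
  have X: "fl_eq (to_floating (Inl (tree_elem z))) (walk_word (gamma z))"
    "to_floating (Inl (tree_elem z)) \<in> words (floating_gens K)" if "z \<in> \<Union>K" for z
    using to_floating_Inl[OF tree_word_gamma_words[OF that]]
      subst_edge_letter_tree_word walk_between_gamma[OF that]
    unfolding tree_elem_def walk_between_def by (blast intro: pres_eq_trans)+
  have "closed_loop [x, y] = gamma x @ rev (gamma y)"
    using walk_between_gamma[OF v(2)] gamma_not_Nil[OF v(2)]
    by (simp add: closed_loop_def walk_between_def) (metis hd_rev list.collapse rev_is_Nil_conv)
  then have "walk_word (closed_loop [x, y]) = ?P @ [((x, y), True)] @ walk_word (rev (gamma y))"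
    using walk_word_join[of "gamma x" "rev (gamma y)"] gamma_not_Nil v walk_between_gamma
    by (simp add: walk_between_def hd_rev)
  then have loop: "fl_eq (to_floating (Inr (loop_class (closed_loop [x, y])))) (?P @ [((x, y), True)] @ inv_word ?Q)"
    using to_floating_Inr[OF closed_loop_edge_loop[OF walk_between_edge[OF s(2)] v(1)]]
      pres_eq_cong[OF walk_word_rev[OF walks(4)], of "?P @ [((x, y), True)]" "[]"]
    by (auto intro: pres_eq_trans)
  have "subst_word to_floating (to_product s) = inv_word (to_floating (Inl (tree_elem x)))
      @ to_floating (Inr (loop_class (closed_loop [x, y]))) @ to_floating (Inl (tree_elem y))"
    using s by (simp add: to_product_def)
  also have "fl_eq \<dots> (inv_word ?P @ (?P @ [((x, y), True)] @ inv_word ?Q) @ ?Q)"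
    by (intro pres_eq_append pres_eq_inv_word[OF X(2)[OF v(1)] PQ(1) X(1)[OF v(1)]] loop X(1)[OF v(2)])
  also have "inv_word ?P @ (?P @ [((x, y), True)] @ inv_word ?Q) @ ?Q
      = [] @ (inv_word ?P @ ?P) @ ([((x, y), True)] @ inv_word ?Q @ ?Q)"
    by simp
  also have "fl_eq \<dots> ([] @ [] @ ([((x, y), True)] @ inv_word ?Q @ ?Q))"
    by (rule pres_eq_cong, rule pres_eq_inv_word_append[OF PQ(1)])
  also have "\<dots> = [((x, y), True)] @ (inv_word ?Q @ ?Q) @ []"
    by simp
  also have "fl_eq \<dots> ([((x, y), True)] @ [] @ [])"
    by (rule pres_eq_cong, rule pres_eq_inv_word_append[OF PQ(2)])
  finally show ?thesis
    using s by simp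
qed

lemma floating_group_iso_free_product: "floating_group K \<cong> free_product FE Pi1"
  unfolding floating_group_presentation free_product_presentation
  by (rule presented_group_iso[OF to_product_words to_product_relator to_floating_words
        to_floating_relator to_floating_to_product to_product_to_floating])

end

theorem proposition6p3:
  fixes K :: "'v set set" and E :: "'v set set" and p :: 'v
  assumes "simplicial_complex K"
    and "sc_connected K"
    and "spanning_tree_edges K E"
    and "p \<in> vertices K"
  shows "floating_group K \<cong> free_product (free_group E) (edge_path_group K p)
         \<and> (\<exists>X :: 'v set set. floating_group K \<cong> free_product (free_group X) (edge_path_group K p))"
proof -
  interpret spanning_tree K E p
    using assms by unfold_locales
  show ?thesis
    using floating_group_iso_free_product by blast
qed

end
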